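(* If TDS is undecidable, then the $<$-universality problem and the $<$-inclusion problem of discounted-sum automata over infinite words are undecidable.
   Context: An instance of TDS consists of a rational discount factor $0<\lambda<1$, a rational target $t$, and rational weights $a,b$; it asks whether there exists $w\in\{a,b\}^\omega$ with $\sum_{i=0}^\infty w(i)\lambda^i=t$. A discounted-sum automaton (DSA) over infinite words is a tuple $\langle\Sigma,Q,q_{in},\delta,\gamma,\lambda\rangle$ with finite alphabet $\Sigma$, finite state set $Q$, initial state $q_{in}$, transition relation $\delta\subseteq Q\times\Sigma\times Q$, weight function $\gamma:\delta\to\mathbb Q$ and rational discount factor $0<\lambda<1$. A run on an infinite word $\sigma_1\sigma_2\cdots$ is $q_0,\sigma_1,q_1,\sigma_2,\dots$ with $q_0=q_{in}$ and $(q_i,\sigma_{i+1},q_{i+1})\in\delta$; every infinite run is accepting; its value is $\sum_{i=0}^\infty\lambda^i\gamma(q_i,\sigma_{i+1},q_{i+1})$, and $\mathcal A(w)$ is the infimum of the values of runs on $w$. The $<$-universality problem asks, given $\mathcal A$ and $t\in\mathbb Q$, whether $\mathcal A(w)<t$ for every infinite word $w$; the $<$-inclusion problem asks, given $\mathcal A,\mathcal B$, whether $\mathcal A(w)<\mathcal B(w)$ for every infinite word $w$. *)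

theory Defs
  imports Complex_Main "HOL-Library.Nat_Bijection" "HOL-Library.Extended_Real"
begin

datatype recf = Zero | Succ | Proj nat | Comp recf "recf list" | Prec recf recf | Mu recf

inductive recf_eval :: "recf \<Rightarrow> nat list \<Rightarrow> nat \<Rightarrow> bool" where
  zero: "recf_eval Zero xs 0"
| succ: "recf_eval Succ (x # xs) (Suc x)"
| proj: "i < length xs \<Longrightarrow> recf_eval (Proj i) xs (xs ! i)"
| comp: "length ys = length gs \<Longrightarrow> (\<forall>i < length gs. recf_eval (gs ! i) xs (ys ! i))
          \<Longrightarrow> recf_eval f ys z \<Longrightarrow> recf_eval (Comp f gs) xs z"
| prec0: "recf_eval f xs y \<Longrightarrow> recf_eval (Prec f g) (0 # xs) y"
| precS: "recf_eval (Prec f g) (n # xs) y \<Longrightarrow> recf_eval g (n # y # xs) z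
          \<Longrightarrow> recf_eval (Prec f g) (Suc n # xs) z"
| mu: "recf_eval f (n # xs) 0 \<Longrightarrow> (\<forall>m < n. \<exists>y. recf_eval f (m # xs) (Suc y))
          \<Longrightarrow> recf_eval (Mu f) xs n"

definition decidable :: "(nat \<Rightarrow> bool) \<Rightarrow> bool" where
  "decidable P \<longleftrightarrow> (\<exists>f. \<forall>n. recf_eval f [n] (if P n then 1 else 0))"

definition enc_rat :: "rat \<Rightarrow> nat" where
  "enc_rat q = prod_encode (int_encode (fst (quotient_of q)), nat (snd (quotient_of q)))"

definition enc_tds :: "rat \<Rightarrow> rat \<Rightarrow> rat \<Rightarrow> rat \<Rightarrow> nat" where
  "enc_tds lam t a b = list_encode [enc_rat lam, enc_rat t, enc_rat a, enc_rat b]"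

definition TDS :: "nat \<Rightarrow> bool" where
  "TDS n \<longleftrightarrow> (\<exists>lam t a b. n = enc_tds lam t a b \<and> 0 < lam \<and> lam < 1 \<and>
      (\<exists>w :: nat \<Rightarrow> rat. (\<forall>i. w i \<in> {a, b}) \<and>
         (\<lambda>i. real_of_rat (w i) * real_of_rat lam ^ i) sums real_of_rat t))"

text \<open>States are 0..<nstates, letters are 0..<nletters; the transition relation
together with the weight function is a list of ((p, a, q), weight) with distinct
transitions.\<close>
record dsa =
  nstates :: nat
  nletters :: nat
  init :: nat
  trans :: "((nat \<times> nat \<times> nat) \<times> rat) list"
  disc :: rat

definition wf_dsa :: "dsa \<Rightarrow> bool" where
  "wf_dsa A \<longleftrightarrow> init A < nstates A \<and> 0 < disc A \<and> disc A < 1 \<and>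
     distinct (map fst (trans A)) \<and>
     (\<forall>((p, s, q), c) \<in> set (trans A). p < nstates A \<and> s < nletters A \<and> q < nstates A)"

definition delta :: "dsa \<Rightarrow> (nat \<times> nat \<times> nat) set" where
  "delta A = fst ` set (trans A)"

definition gamma :: "dsa \<Rightarrow> nat \<times> nat \<times> nat \<Rightarrow> rat" where
  "gamma A e = the (map_of (trans A) e)"

definition is_word :: "dsa \<Rightarrow> (nat \<Rightarrow> nat) \<Rightarrow> bool" where
  "is_word A w \<longleftrightarrow> (\<forall>i. w i < nletters A)"

text \<open>r is a run on the word w (letter w i is read in step i, i.e. w i is sigma_(i+1)).\<close>
definition is_run :: "dsa \<Rightarrow> (nat \<Rightarrow> nat) \<Rightarrow> (nat \<Rightarrow> nat) \<Rightarrow> bool" where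
  "is_run A w r \<longleftrightarrow> r 0 = init A \<and> (\<forall>i. (r i, w i, r (Suc i)) \<in> delta A)"

definition run_value :: "dsa \<Rightarrow> (nat \<Rightarrow> nat) \<Rightarrow> (nat \<Rightarrow> nat) \<Rightarrow> real" where
  "run_value A w r = (\<Sum>i. real_of_rat (disc A) ^ i * real_of_rat (gamma A (r i, w i, r (Suc i))))"

text \<open>A(w): infimum of the run values (infimum of the empty set is +infinity).\<close>
definition dsa_val :: "dsa \<Rightarrow> (nat \<Rightarrow> nat) \<Rightarrow> ereal" where
  "dsa_val A w = (INF r \<in> {r. is_run A w r}. ereal (run_value A w r))"

definition enc_dsa :: "dsa \<Rightarrow> nat" where
  "enc_dsa A = list_encode [nstates A, nletters A, init A,
     list_encode (map (\<lambda>((p, s, q), c). list_encode [p, s, q, enc_rat c]) (trans A)),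
     enc_rat (disc A)]"

definition LT_UNIV :: "nat \<Rightarrow> bool" where
  "LT_UNIV n \<longleftrightarrow> (\<exists>A t. wf_dsa A \<and> n = prod_encode (enc_dsa A, enc_rat t) \<and>
      (\<forall>w. is_word A w \<longrightarrow> dsa_val A w < ereal (real_of_rat t)))"

definition LT_INCL :: "nat \<Rightarrow> bool" where
  "LT_INCL n \<longleftrightarrow> (\<exists>A B. wf_dsa A \<and> wf_dsa B \<and> nletters A = nletters B \<and>
      n = prod_encode (enc_dsa A, enc_dsa B) \<and>
      (\<forall>w. is_word A w \<longrightarrow> dsa_val A w < dsa_val B w))"

end

theory Submission
  imports Defs
begin

text \<open>
  The automaton \<open>tds_dsa lam t a b\<close> reads letters 0 and 1 as the weights a and b and guesses
  on its first transition whether the discounted sum V(w) of the word lies above or below t: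
  its two runs have the values V(w) - t and t - V(w), so its value is -|V(w) - t|, which is
  negative exactly when V(w) \<noteq> t. Hence an instance of TDS is positive iff this automaton is
  not <-universal for the threshold 0, iff it is not <-included in the constant zero automaton.
  The instance map is computable because the canonical code of a rational number is the least
  code of a fraction equal to it, so it can be found by unbounded minimisation; everything else
  is routine arithmetic on codes.
\<close>

section \<open>Total recursive functions\<close>

definition computable :: "(nat \<Rightarrow> nat) \<Rightarrow> bool" where
  "computable f \<longleftrightarrow> (\<exists>r. \<forall>x. recf_eval r [x] (f x))"

definition computable2 :: "(nat \<Rightarrow> nat \<Rightarrow> nat) \<Rightarrow> bool" where
  "computable2 f \<longleftrightarrow> (\<exists>r. \<forall>x y. recf_eval r [x, y] (f x y))"

lemma decidable_iff_computable: "decidable P \<longleftrightarrow> computable (\<lambda>n. of_bool (P n))"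
  unfolding decidable_def computable_def of_bool_def ..

lemma recf_eval_Comp1:
  "recf_eval g xs y \<Longrightarrow> recf_eval f [y] z \<Longrightarrow> recf_eval (Comp f [g]) xs z"
  by (rule recf_eval.comp[where ys = "[y]"]) auto

lemma recf_eval_Comp2:
  "recf_eval g xs y \<Longrightarrow> recf_eval h xs y' \<Longrightarrow> recf_eval f [y, y'] z
    \<Longrightarrow> recf_eval (Comp f [g, h]) xs z"
  by (rule recf_eval.comp[where ys = "[y, y']"]) (auto simp: less_Suc_eq)

lemma recf_eval_Proj0: "recf_eval (Proj 0) (x # xs) x"
  using recf_eval.proj[of 0 "x # xs"] by simp

lemma recf_eval_Proj1: "recf_eval (Proj 1) (x # y # xs) y"
  using recf_eval.proj[of 1 "x # y # xs"] by simp

lemma recf_eval_Proj2: "recf_eval (Proj 2) (x # y # z # xs) z"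
  using recf_eval.proj[of 2 "x # y # z # xs"] by simp

lemma recf_eval_const: "recf_eval (((\<lambda>g. Comp Succ [g]) ^^ c) Zero) xs c"
proof (induction c)
  case 0
  show ?case by (simp add: recf_eval.zero)
next
  case (Suc c)
  then show ?case using recf_eval_Comp1[OF Suc recf_eval.succ[of c "[]"]] by simp
qed

lemma recf_eval_Prec:
  assumes "recf_eval f xs (F 0)" and "\<And>k. recf_eval g (k # F k # xs) (F (Suc k))"
  shows "recf_eval (Prec f g) (n # xs) (F n)"
proof (induction n)
  case 0
  show ?case using assms(1) by (rule recf_eval.prec0)
next
  case (Suc n)
  show ?case using Suc assms(2) by (rule recf_eval.precS)
qed

lemma computable_const: "computable (\<lambda>x. c)"
  unfolding computable_def using recf_eval_const by blast

lemma computable_id: "computable (\<lambda>x. x)"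
  unfolding computable_def using recf_eval_Proj0 by blast

lemma computable_compose:
  assumes "computable f" and "computable g"
  shows "computable (\<lambda>x. f (g x))"
proof -
  obtain rf rg where rf: "\<And>x. recf_eval rf [x] (f x)" and rg: "\<And>x. recf_eval rg [x] (g x)"
    using assms unfolding computable_def by blast
  have "recf_eval (Comp rf [rg]) [x] (f (g x))" for x by (rule recf_eval_Comp1[OF rg rf])
  then show ?thesis unfolding computable_def by blast
qed

lemma computable_compose2:
  assumes "computable2 f" and "computable g" and "computable h"
  shows "computable (\<lambda>x. f (g x) (h x))"
proof -
  obtain rf rg rh where rf: "\<And>x y. recf_eval rf [x, y] (f x y)"
    and rg: "\<And>x. recf_eval rg [x] (g x)" and rh: "\<And>x. recf_eval rh [x] (h x)"
    using assms unfolding computable_def computable2_def by blast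
  have "recf_eval (Comp rf [rg, rh]) [x] (f (g x) (h x))" for x
    by (rule recf_eval_Comp2[OF rg rh rf])
  then show ?thesis unfolding computable_def by blast
qed

lemma computable2_const: "computable2 (\<lambda>x y. c)"
  unfolding computable2_def using recf_eval_const by blast

lemma computable2_lift_fst:
  assumes "computable f"
  shows "computable2 (\<lambda>x y. f x)"
proof -
  obtain r where r: "\<And>x. recf_eval r [x] (f x)"
    using assms unfolding computable_def by blast
  have "recf_eval (Comp r [Proj 0]) [x, y] (f x)" for x y
    by (rule recf_eval_Comp1[OF recf_eval_Proj0 r])
  then show ?thesis unfolding computable2_def by blast
qed

lemma computable2_lift_snd:
  assumes "computable f"
  shows "computable2 (\<lambda>x y. f y)"
proof -
  obtain r where r: "\<And>x. recf_eval r [x] (f x)"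
    using assms unfolding computable_def by blast
  have "recf_eval (Comp r [Proj 1]) [x, y] (f y)" for x y
    by (rule recf_eval_Comp1[OF recf_eval_Proj1 r])
  then show ?thesis unfolding computable2_def by blast
qed

lemma computable2_compose2:
  assumes "computable2 f" and "computable2 g" and "computable2 h"
  shows "computable2 (\<lambda>x y. f (g x y) (h x y))"
proof -
  obtain rf rg rh where rf: "\<And>x y. recf_eval rf [x, y] (f x y)"
    and rg: "\<And>x y. recf_eval rg [x, y] (g x y)" and rh: "\<And>x y. recf_eval rh [x, y] (h x y)"
    using assms unfolding computable2_def by blast
  have "recf_eval (Comp rf [rg, rh]) [x, y] (f (g x y) (h x y))" for x y
    by (rule recf_eval_Comp2[OF rg rh rf])
  then show ?thesis unfolding computable2_def by blast
qed

lemma computable2_plus: "computable2 (+)"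
proof -
  have "recf_eval (Prec (Proj 0) (Comp Succ [Proj 1])) [n, x] (n + x)" for n x
  proof (rule recf_eval_Prec[where F = "\<lambda>n. n + x"])
    show "recf_eval (Proj 0) [x] (0 + x)" using recf_eval_Proj0 by simp
    show "recf_eval (Comp Succ [Proj 1]) [k, k + x, x] (Suc k + x)" for k
      using recf_eval_Comp1[OF recf_eval_Proj1 recf_eval.succ[of "k + x" "[]"]] by simp
  qed
  then show ?thesis unfolding computable2_def by blast
qed

lemma computable2_times: "computable2 (*)"
proof -
  obtain r where r: "\<And>x y. recf_eval r [x, y] (x + y)"
    using computable2_plus unfolding computable2_def by blast
  have "recf_eval (Prec Zero (Comp r [Proj 1, Proj 2])) [n, x] (n * x)" for n x
  proof (rule recf_eval_Prec[where F = "\<lambda>n. n * x"])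
    show "recf_eval Zero [x] (0 * x)" using recf_eval.zero by simp
    show "recf_eval (Comp r [Proj 1, Proj 2]) [k, k * x, x] (Suc k * x)" for k
      using recf_eval_Comp2[OF recf_eval_Proj1 recf_eval_Proj2 r, of k "k * x" x "[]"]
      by (simp add: add.commute)
  qed
  then show ?thesis unfolding computable2_def by blast
qed

lemma computable2_minus: "computable2 (-)"
proof -
  define pred where "pred = Prec Zero (Proj 0)"
  have pred: "recf_eval pred [n] (n - 1)" for n
    unfolding pred_def
    by (rule recf_eval_Prec[where F = "\<lambda>n. n - 1"]) (simp_all add: recf_eval.zero recf_eval_Proj0)
  define monus where "monus = Prec (Proj 0) (Comp pred [Proj 1])"
  have monus: "recf_eval monus [n, x] (x - n)" for n x
    unfolding monus_def
  proof (rule recf_eval_Prec[where F = "\<lambda>n. x - n"])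
    show "recf_eval (Proj 0) [x] (x - 0)" using recf_eval_Proj0 by simp
    show "recf_eval (Comp pred [Proj 1]) [k, x - k, x] (x - Suc k)" for k
      using recf_eval_Comp1[OF recf_eval_Proj1 pred, of k "x - k" "[x]"] by (simp add: diff_Suc)
  qed
  have "recf_eval (Comp monus [Proj 1, Proj 0]) [x, y] (x - y)" for x y
    by (rule recf_eval_Comp2[OF recf_eval_Proj1 recf_eval_Proj0 monus])
  then show ?thesis unfolding computable2_def by blast
qed

lemmas computable_add = computable_compose2[OF computable2_plus]
lemmas computable_mult = computable_compose2[OF computable2_times]
lemmas computable_diff = computable_compose2[OF computable2_minus]
lemmas computable2_add = computable2_compose2[OF computable2_plus]
lemmas computable2_mult = computable2_compose2[OF computable2_times]
lemmas computable2_diff = computable2_compose2[OF computable2_minus]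

lemma computable_Suc: "computable Suc"
  unfolding computable_def using recf_eval.succ by blast

lemma computable2_fst: "computable2 (\<lambda>x y. x)"
  using computable2_lift_fst[OF computable_id] .

lemma computable2_snd: "computable2 (\<lambda>x y. y)"
  using computable2_lift_snd[OF computable_id] .

lemma computable2_equal: "computable2 (\<lambda>x y. of_bool (x = y))"
proof -
  have "computable2 (\<lambda>x y. 1 - ((x - y) + (y - x)))"
    by (intro computable2_diff computable2_add computable2_const computable2_fst computable2_snd)
  moreover have "(\<lambda>x y :: nat. 1 - ((x - y) + (y - x))) = (\<lambda>x y. of_bool (x = y))"
    by (auto simp: fun_eq_iff)
  ultimately show ?thesis by simp
qed

lemma computable2_less: "computable2 (\<lambda>x y. of_bool (x < y))"
proof -
  have "computable2 (\<lambda>x y. 1 - (1 - (y - x)))"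
    by (intro computable2_diff computable2_const computable2_fst computable2_snd)
  moreover have "(\<lambda>x y :: nat. 1 - (1 - (y - x))) = (\<lambda>x y. of_bool (x < y))"
    by (auto simp: fun_eq_iff)
  ultimately show ?thesis by simp
qed

lemmas computable_of_bool_eq = computable_compose2[OF computable2_equal]
lemmas computable_of_bool_less = computable_compose2[OF computable2_less]
lemmas computable2_of_bool_eq = computable2_compose2[OF computable2_equal]
lemmas computable2_of_bool_less = computable2_compose2[OF computable2_less]

lemma computable_of_bool_conj:
  "computable (\<lambda>x. of_bool (P x)) \<Longrightarrow> computable (\<lambda>x. of_bool (Q x))
    \<Longrightarrow> computable (\<lambda>x. of_bool (P x \<and> Q x))"
  unfolding of_bool_conj by (rule computable_mult)

lemma computable2_of_bool_conj:
  "computable2 (\<lambda>x y. of_bool (P x y)) \<Longrightarrow> computable2 (\<lambda>x y. of_bool (Q x y))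
    \<Longrightarrow> computable2 (\<lambda>x y. of_bool (P x y \<and> Q x y))"
  unfolding of_bool_conj by (rule computable2_mult)

lemma computable_Least:
  assumes "computable2 (\<lambda>m x. of_bool (Q m x))" and "\<And>x. \<exists>m. Q m x"
  shows "computable (\<lambda>x. LEAST m. Q m x)"
proof -
  have "computable2 (\<lambda>m x. 1 - of_bool (Q m x))"
    by (intro computable2_diff computable2_const assms(1))
  then obtain r where r: "\<And>m x. recf_eval r [m, x] (1 - of_bool (Q m x))"
    unfolding computable2_def by blast
  have "recf_eval (Mu r) [x] (LEAST m. Q m x)" for x
  proof (rule recf_eval.mu)
    have "Q (LEAST m. Q m x) x" using assms(2) by (rule LeastI_ex)
    then show "recf_eval r [LEAST m. Q m x, x] 0" using r[of "LEAST m. Q m x" x] by simp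
    show "\<forall>m < (LEAST m. Q m x). \<exists>y. recf_eval r [m, x] (Suc y)"
    proof (intro allI impI)
      fix m
      assume "m < (LEAST m. Q m x)"
      then have "\<not> Q m x" by (rule not_less_Least)
      then show "\<exists>y. recf_eval r [m, x] (Suc y)" using r[of m x] by auto
    qed
  qed
  then show ?thesis unfolding computable_def by blast
qed

lemma computable_rec_nat:
  assumes "computable2 g"
  shows "computable (rec_nat c g)"
proof -
  obtain r where r: "\<And>x y. recf_eval r [x, y] (g x y)"
    using assms unfolding computable2_def by blast
  have "recf_eval (Prec (((\<lambda>g. Comp Succ [g]) ^^ c) Zero) r) [n] (rec_nat c g n)" for n
  proof (rule recf_eval_Prec)
    show "recf_eval (((\<lambda>g. Comp Succ [g]) ^^ c) Zero) [] (rec_nat c g 0)"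
      using recf_eval_const by simp
    show "recf_eval r [k, rec_nat c g k] (rec_nat c g (Suc k))" for k
      using r by simp
  qed
  then show ?thesis unfolding computable_def by blast
qed

lemma decidable_preimage: "decidable P \<Longrightarrow> computable f \<Longrightarrow> decidable (\<lambda>n. P (f n))"
  unfolding decidable_iff_computable by (rule computable_compose)

lemma decidable_Not:
  assumes "decidable P"
  shows "decidable (\<lambda>n. \<not> P n)"
proof -
  have "computable (\<lambda>n. 1 - of_bool (P n))"
    using assms unfolding decidable_iff_computable by (rule computable_diff[OF computable_const])
  moreover have "(\<lambda>n. 1 - of_bool (P n)) = (\<lambda>n. of_bool (\<not> P n) :: nat)"
    by (simp add: fun_eq_iff)
  ultimately show ?thesis
    unfolding decidable_iff_computable by simp
qed

lemma decidable_conj: "decidable P \<Longrightarrow> decidable Q \<Longrightarrow> decidable (\<lambda>n. P n \<and> Q n)"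
  unfolding decidable_iff_computable by (rule computable_of_bool_conj)

section \<open>Decoding pairs, integers and lists\<close>

lemma computable_triangle: "computable triangle"
proof -
  have "triangle = rec_nat 0 (\<lambda>k t. t + Suc k)"
  proof
    show "triangle n = rec_nat 0 (\<lambda>k t. t + Suc k) n" for n by (induction n) simp_all
  qed
  moreover have "computable2 (\<lambda>k t. t + Suc k)"
    by (intro computable2_add computable2_snd computable2_lift_fst computable_Suc)
  ultimately show ?thesis by (metis computable_rec_nat)
qed

lemma computable_prod_encode:
  "computable f \<Longrightarrow> computable g \<Longrightarrow> computable (\<lambda>x. prod_encode (f x, g x))"
  unfolding prod_encode_def
  by (simp, intro computable_add computable_compose[OF computable_triangle])

lemma triangle_Least_bounds:
  fixes m :: nat
  defines "s \<equiv> LEAST s. m < triangle (Suc s)"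
  shows "triangle s \<le> m" and "m < triangle (Suc s)"
proof -
  have "m < triangle (Suc m)" by (induction m) auto
  then show "m < triangle (Suc s)" unfolding s_def by (rule LeastI)
  show "triangle s \<le> m"
  proof (cases s)
    case (Suc s')
    then have "\<not> m < triangle (Suc s')" unfolding s_def by (metis lessI not_less_Least)
    with Suc show ?thesis by simp
  qed simp
qed

lemma prod_decode_eq_Least:
  fixes m :: nat
  defines "s \<equiv> LEAST s. m < triangle (Suc s)"
  shows "prod_decode m = (m - triangle s, s - (m - triangle s))"
proof -
  have "triangle s \<le> m" and "m - triangle s \<le> s"
    using triangle_Least_bounds[of m] unfolding s_def by auto
  then show ?thesis
    using prod_decode_triangle_add[of s "m - triangle s"] by (simp add: prod_decode_aux.simps)
qed

lemma computable_diagonal: "computable (\<lambda>m. LEAST s. m < triangle (Suc s))"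
proof (rule computable_Least)
  show "computable2 (\<lambda>s m. of_bool (m < triangle (Suc s)))"
    by (intro computable2_of_bool_less computable2_snd computable2_lift_fst
        computable_compose[OF computable_triangle] computable_Suc)
  show "\<exists>s. m < triangle (Suc s)" for m
    using triangle_Least_bounds(2) by blast
qed

lemma computable_fst_prod_decode: "computable (\<lambda>m. fst (prod_decode m))"
  unfolding prod_decode_eq_Least fst_conv
  by (intro computable_diff computable_id computable_compose[OF computable_triangle]
      computable_diagonal)

lemma computable_snd_prod_decode: "computable (\<lambda>m. snd (prod_decode m))"
  unfolding prod_decode_eq_Least snd_conv
  by (intro computable_diff computable_id computable_compose[OF computable_triangle]
      computable_diagonal)

lemma computable_div2: "computable (\<lambda>k. k div 2)"
proof -
  have "computable (\<lambda>k. LEAST h. k < 2 * h + 2)"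
    by (rule computable_Least, intro computable2_of_bool_less computable2_snd computable2_add
        computable2_mult computable2_const computable2_fst) presburger
  moreover have "(LEAST h. k < 2 * h + 2) = k div 2" for k :: nat
    by (rule Least_equality) auto
  ultimately show ?thesis by simp
qed

lemma computable_mod2: "computable (\<lambda>k. k mod 2)"
proof -
  have "computable (\<lambda>k. k - 2 * (k div 2))"
    by (intro computable_diff computable_mult computable_id computable_const computable_div2)
  then show ?thesis by (simp add: minus_mult_div_eq_mod)
qed

lemma nat_int_decode: "nat (int_decode k) = (1 - k mod 2) * (k div 2)"
  by (cases "even k") (auto simp: int_decode_def sum_decode_def odd_iff_mod_2_eq_one)

lemma nat_uminus_int_decode: "nat (- int_decode k) = k mod 2 * Suc (k div 2)"
  by (cases "even k") (auto simp: int_decode_def sum_decode_def odd_iff_mod_2_eq_one)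

lemma computable_nat_int_decode: "computable (\<lambda>k. nat (int_decode k))"
  unfolding nat_int_decode
  by (intro computable_mult computable_diff computable_const computable_mod2 computable_div2)

lemma computable_nat_uminus_int_decode: "computable (\<lambda>k. nat (- int_decode k))"
  unfolding nat_uminus_int_decode
  by (intro computable_mult computable_compose[OF computable_Suc] computable_mod2 computable_div2)

lemma computable_list_encode_Cons:
  "computable f \<Longrightarrow> computable (\<lambda>x. list_encode (g x))
    \<Longrightarrow> computable (\<lambda>x. list_encode (f x # g x))"
  by (simp, intro computable_compose[OF computable_Suc] computable_prod_encode)

fun list_code_nth :: "nat \<Rightarrow> nat \<Rightarrow> nat" where
  "list_code_nth 0 n = fst (prod_decode (n - 1))"
| "list_code_nth (Suc i) n = list_code_nth i (snd (prod_decode (n - 1)))"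

lemma list_code_nth_list_encode: "i < length xs \<Longrightarrow> list_code_nth i (list_encode xs) = xs ! i"
proof (induction i arbitrary: xs)
  case 0
  then show ?case by (cases xs) simp_all
next
  case (Suc i)
  then show ?case by (cases xs) simp_all
qed

lemma computable_list_code_nth: "computable (list_code_nth i)"
proof (induction i)
  case 0
  show ?case
    by (simp, intro computable_compose[OF computable_fst_prod_decode] computable_diff
        computable_id computable_const)
next
  case (Suc i)
  show ?case
    by (simp, intro computable_compose[OF Suc] computable_compose[OF computable_snd_prod_decode]
        computable_diff computable_id computable_const)
qed

section \<open>Codes of rational numbers\<close>

text \<open>A code with denominator 0 is read with denominator 1, so that every natural number
  denotes a fraction with positive denominator.\<close>

definition rat_of_code :: "nat \<Rightarrow> rat" where
  "rat_of_code m = Fract (int_decode (fst (prod_decode m))) (int (max 1 (snd (prod_decode m))))"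

definition code_num_pos :: "nat \<Rightarrow> nat" where
  "code_num_pos m = nat (int_decode (fst (prod_decode m)))"

definition code_num_neg :: "nat \<Rightarrow> nat" where
  "code_num_neg m = nat (- int_decode (fst (prod_decode m)))"

definition code_den :: "nat \<Rightarrow> nat" where
  "code_den m = max 1 (snd (prod_decode m))"

lemma code_den_pos: "0 < code_den m"
  by (simp add: code_den_def)

lemma rat_of_code_eq_Fract:
  "rat_of_code m = Fract (int (code_num_pos m) - int (code_num_neg m)) (int (code_den m))"
  unfolding rat_of_code_def code_num_pos_def code_num_neg_def code_den_def by simp

lemma computable_code_num_pos: "computable code_num_pos"
  unfolding code_num_pos_def
  by (rule computable_compose[OF computable_nat_int_decode computable_fst_prod_decode])

lemma computable_code_num_neg: "computable code_num_neg"
  unfolding code_num_neg_def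
  by (rule computable_compose[OF computable_nat_uminus_int_decode computable_fst_prod_decode])

lemma computable_code_den: "computable code_den"
proof -
  have "code_den = (\<lambda>m. snd (prod_decode m) + (1 - snd (prod_decode m)))"
    by (auto simp: code_den_def fun_eq_iff max_def)
  moreover have "computable (\<lambda>m. snd (prod_decode m) + (1 - snd (prod_decode m)))"
    by (intro computable_add computable_diff computable_const computable_snd_prod_decode)
  ultimately show ?thesis by simp
qed

lemma Fract_nat_diff_eq_iff:
  assumes "0 < d" and "0 < d'"
  shows "Fract (int p - int n) (int d) = Fract (int p' - int n') (int d')
    \<longleftrightarrow> p * d' + n' * d = p' * d + n * d'"
proof -
  have "Fract (int p - int n) (int d) = Fract (int p' - int n') (int d')
      \<longleftrightarrow> (int p - int n) * int d' = (int p' - int n') * int d"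
    using assms by (simp add: eq_rat)
  also have "\<dots> \<longleftrightarrow> int (p * d' + n' * d) = int (p' * d + n * d')"
    by (simp add: algebra_simps)
  finally show ?thesis unfolding of_nat_eq_iff .
qed

lemma rat_of_code_diff:
  "rat_of_code a - rat_of_code b =
    Fract (int (code_num_pos a * code_den b + code_num_neg b * code_den a)
             - int (code_num_neg a * code_den b + code_num_pos b * code_den a))
          (int (code_den a * code_den b))"
  unfolding rat_of_code_eq_Fract using code_den_pos[of a] code_den_pos[of b]
  by (simp add: algebra_simps)

lemma rat_of_code_uminus:
  "- rat_of_code a = Fract (int (code_num_neg a) - int (code_num_pos a)) (int (code_den a))"
  unfolding rat_of_code_eq_Fract by simp

lemma prod_decode_enc_rat:
  "prod_decode (enc_rat q) = (int_encode (fst (quotient_of q)), nat (snd (quotient_of q)))"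
  by (simp add: enc_rat_def)

lemma snd_prod_decode_enc_rat_pos: "0 < snd (prod_decode (enc_rat q))"
  using quotient_of_denom_pos' by (simp add: prod_decode_enc_rat)

lemma rat_of_code_enc_rat [simp]: "rat_of_code (enc_rat q) = q"
proof -
  obtain p d where q: "quotient_of q = (p, d)" by (cases "quotient_of q")
  have "0 < d" using q by (rule quotient_of_denom_pos)
  have "q = Fract p d" using quotient_of_div[OF q] by (simp add: Fract_of_int_quotient)
  with q \<open>0 < d\<close> show ?thesis by (simp add: rat_of_code_def prod_decode_enc_rat)
qed

lemma enc_rat_eq_iff [simp]: "enc_rat x = enc_rat y \<longleftrightarrow> x = y"
  by (metis rat_of_code_enc_rat)

lemma triangle_mono: "a \<le> b \<Longrightarrow> triangle a \<le> triangle b"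
  unfolding triangle_def by (intro div_le_mono mult_le_mono) simp_all

lemma prod_encode_mono: "a \<le> a' \<Longrightarrow> b \<le> b' \<Longrightarrow> prod_encode (a, b) \<le> prod_encode (a', b')"
  unfolding prod_encode_def using triangle_mono[of "a + b" "a' + b'"] by simp

lemma int_encode_le_mult: "1 \<le> c \<Longrightarrow> int_encode p \<le> int_encode (p * c)"
proof (cases "0 \<le> p")
  case True
  moreover assume "1 \<le> c"
  ultimately have "p \<le> p * c" and "0 \<le> p * c"
    by (simp_all add: mult_le_cancel_left1)
  with True show ?thesis by (simp add: int_encode_def sum_encode_def nat_mono)
next
  case False
  moreover assume "1 \<le> c"
  ultimately have "p * c \<le> p" and "p * c < 0"
    by (simp_all add: mult_le_cancel_left2 mult_neg_pos)
  moreover have "nat (- p - 1) \<le> nat (- (p * c) - 1)"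
    using \<open>p * c \<le> p\<close> by (intro nat_mono) linarith
  ultimately show ?thesis using False by (simp add: int_encode_def sum_encode_def)
qed

lemma enc_rat_le:
  assumes "0 < snd (prod_decode m)" and "rat_of_code m = q"
  shows "enc_rat q \<le> m"
proof -
  obtain k e where m: "prod_decode m = (k, e)" by (cases "prod_decode m")
  define g where "g = gcd (int_decode k) (int e)"
  have "0 < e" using assms(1) m by simp
  then have "0 < g" unfolding g_def by simp
  have "quotient_of q = Rat.normalize (int_decode k, int e)"
    using assms(2) m \<open>0 < e\<close> by (auto simp: rat_of_code_def quotient_of_Fract max_def)
  also have "\<dots> = (int_decode k div g, int e div g)"
    using \<open>0 < e\<close> by (simp add: Rat.normalize_def g_def Let_def)
  finally have q: "quotient_of q = (int_decode k div g, int e div g)" .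
  \<comment> \<open>dividing numerator and denominator by their gcd can only decrease both codes\<close>
  have "int_encode (int_decode k div g) \<le> int_encode (int_decode k div g * g)"
    using \<open>0 < g\<close> by (intro int_encode_le_mult) simp
  then have "int_encode (int_decode k div g) \<le> k"
    by (simp add: g_def)
  moreover have "nat (int e div g) \<le> e"
    using zdiv_mono2[of "int e" 1 g] \<open>0 < g\<close> by (simp add: nat_le_iff)
  ultimately have
    "prod_encode (int_encode (int_decode k div g), nat (int e div g)) \<le> prod_encode (k, e)"
    by (rule prod_encode_mono)
  then show ?thesis
    by (metis enc_rat_def m prod_decode_inverse q prod.sel)
qed

lemma enc_rat_eq_Least: "enc_rat q = (LEAST m. 0 < snd (prod_decode m) \<and> rat_of_code m = q)"
  by (rule Least_equality[symmetric]) (simp_all add: snd_prod_decode_enc_rat_pos enc_rat_le)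

lemma computable_enc_rat_Fract:
  assumes "computable p" and "computable n" and "computable d" and "\<And>x. 0 < d x"
  shows "computable (\<lambda>x. enc_rat (Fract (int (p x) - int (n x)) (int (d x))))"
proof -
  have code_iff: "0 < snd (prod_decode m) \<and> rat_of_code m = Fract (int (p x) - int (n x)) (int (d x))
      \<longleftrightarrow> 0 < snd (prod_decode m) \<and>
          code_num_pos m * d x + n x * code_den m = p x * code_den m + code_num_neg m * d x" for m x
    unfolding rat_of_code_eq_Fract using Fract_nat_diff_eq_iff[OF code_den_pos assms(4)] by simp
  have "computable2 (\<lambda>m x. of_bool (0 < snd (prod_decode m) \<and>
      code_num_pos m * d x + n x * code_den m = p x * code_den m + code_num_neg m * d x))"
    by (intro computable2_of_bool_conj computable2_of_bool_less computable2_of_bool_eq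
        computable2_add computable2_mult computable2_const computable2_lift_fst computable2_lift_snd
        computable_snd_prod_decode computable_code_num_pos computable_code_num_neg
        computable_code_den assms(1-3))
  then have "computable2 (\<lambda>m x. of_bool (0 < snd (prod_decode m) \<and>
      rat_of_code m = Fract (int (p x) - int (n x)) (int (d x))))"
    by (simp only: code_iff)
  moreover have "\<exists>m. 0 < snd (prod_decode m) \<and> rat_of_code m = q" for q
    using snd_prod_decode_enc_rat_pos rat_of_code_enc_rat by blast
  ultimately have "computable (\<lambda>x. LEAST m. 0 < snd (prod_decode m) \<and>
      rat_of_code m = Fract (int (p x) - int (n x)) (int (d x)))"
    by (rule computable_Least)
  then show ?thesis unfolding enc_rat_eq_Least .
qed

lemma computable_enc_rat_of_code:
  "computable f \<Longrightarrow> computable (\<lambda>x. enc_rat (rat_of_code (f x)))"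
  unfolding rat_of_code_eq_Fract
  by (intro computable_enc_rat_Fract computable_compose[OF computable_code_num_pos]
      computable_compose[OF computable_code_num_neg] computable_compose[OF computable_code_den]
      code_den_pos)

lemma computable_enc_rat_diff:
  "computable f \<Longrightarrow> computable g
    \<Longrightarrow> computable (\<lambda>x. enc_rat (rat_of_code (f x) - rat_of_code (g x)))"
  unfolding rat_of_code_diff
  by (intro computable_enc_rat_Fract computable_add computable_mult
      computable_compose[OF computable_code_num_pos] computable_compose[OF computable_code_num_neg]
      computable_compose[OF computable_code_den] mult_pos_pos code_den_pos)

lemma computable_enc_rat_uminus:
  "computable f \<Longrightarrow> computable (\<lambda>x. enc_rat (- rat_of_code (f x)))"
  unfolding rat_of_code_uminus
  by (intro computable_enc_rat_Fract computable_compose[OF computable_code_num_pos]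
      computable_compose[OF computable_code_num_neg] computable_compose[OF computable_code_den]
      code_den_pos)

lemma computable_rat_of_code_less:
  assumes "computable f" and "computable g"
  shows "computable (\<lambda>x. of_bool (rat_of_code (f x) < rat_of_code (g x)))"
proof -
  have "rat_of_code a < rat_of_code b \<longleftrightarrow>
      code_num_pos a * code_den b + code_num_neg b * code_den a
        < code_num_neg a * code_den b + code_num_pos b * code_den a" for a b
  proof -
    have "rat_of_code a < rat_of_code b \<longleftrightarrow> rat_of_code a - rat_of_code b < 0" by simp
    also have "\<dots> \<longleftrightarrow> code_num_pos a * code_den b + code_num_neg b * code_den a
        < code_num_neg a * code_den b + code_num_pos b * code_den a"
      unfolding rat_of_code_diff using code_den_pos[of a] code_den_pos[of b]
      by (simp add: Fract_less_zero_iff del: of_nat_add of_nat_mult)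
    finally show ?thesis .
  qed
  moreover have "computable (\<lambda>x. of_bool
      (code_num_pos (f x) * code_den (g x) + code_num_neg (g x) * code_den (f x)
        < code_num_neg (f x) * code_den (g x) + code_num_pos (g x) * code_den (f x)))"
    by (intro computable_of_bool_less computable_add computable_mult
        computable_compose[OF computable_code_num_pos] computable_compose[OF computable_code_num_neg]
        computable_compose[OF computable_code_den] assms)
  ultimately show ?thesis by simp
qed

section \<open>The automata of the reduction\<close>

definition tds_dsa :: "rat \<Rightarrow> rat \<Rightarrow> rat \<Rightarrow> rat \<Rightarrow> dsa" where
  "tds_dsa lam t a b = \<lparr>nstates = 3, nletters = 2, init = 0,
     trans = [((0, 0, 1), a - t), ((0, 1, 1), b - t), ((0, 0, 2), t - a), ((0, 1, 2), t - b),
              ((1, 0, 1), a), ((1, 1, 1), b), ((2, 0, 2), - a), ((2, 1, 2), - b)],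
     disc = lam\<rparr>"

definition zero_dsa :: "rat \<Rightarrow> dsa" where
  "zero_dsa lam = \<lparr>nstates = 1, nletters = 2, init = 0,
     trans = [((0, 0, 0), 0), ((0, 1, 0), 0)], disc = lam\<rparr>"

definition disc_sum :: "rat \<Rightarrow> rat \<Rightarrow> rat \<Rightarrow> (nat \<Rightarrow> nat) \<Rightarrow> real" where
  "disc_sum lam a b w = (\<Sum>i. real_of_rat lam ^ i * real_of_rat (if w i = 0 then a else b))"

definition stay_run :: "nat \<Rightarrow> nat \<Rightarrow> nat" where
  "stay_run q i = (if i = 0 then 0 else q)"

lemma wf_dsa_tds_dsa: "0 < lam \<Longrightarrow> lam < 1 \<Longrightarrow> wf_dsa (tds_dsa lam t a b)"
  by (simp add: wf_dsa_def tds_dsa_def)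

lemma wf_dsa_zero_dsa: "0 < lam \<Longrightarrow> lam < 1 \<Longrightarrow> wf_dsa (zero_dsa lam)"
  by (simp add: wf_dsa_def zero_dsa_def)

lemma is_word_tds_dsa: "is_word (tds_dsa lam t a b) w \<longleftrightarrow> (\<forall>i. w i < 2)"
  by (simp add: is_word_def tds_dsa_def)

lemma summable_disc_sum:
  assumes "0 < lam" and "lam < 1"
  shows "summable (\<lambda>i. real_of_rat lam ^ i * real_of_rat (if w i = 0 then a else b))"
proof (rule summable_comparison_test')
  let ?M = "\<bar>real_of_rat a\<bar> + \<bar>real_of_rat b\<bar>"
  show "summable (\<lambda>i. ?M * real_of_rat lam ^ i)"
    using assms by (intro summable_mult summable_geometric) (simp add: of_rat_less_1_iff)
  show "norm (real_of_rat lam ^ i * real_of_rat (if w i = 0 then a else b))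
      \<le> ?M * real_of_rat lam ^ i" for i
    using assms by (auto simp: abs_mult mult.commute intro!: mult_right_mono)
qed

lemma is_run_tds_dsa_iff:
  assumes "\<And>i. w i < 2"
  shows "is_run (tds_dsa lam t a b) w r \<longleftrightarrow> r = stay_run 1 \<or> r = stay_run 2"
proof
  have delta: "delta (tds_dsa lam t a b) =
      {(0, 0, 1), (0, 1, 1), (0, 0, 2), (0, 1, 2), (1, 0, 1), (1, 1, 1), (2, 0, 2), (2, 1, 2)}"
    by (simp add: delta_def tds_dsa_def)
  have init: "init (tds_dsa lam t a b) = 0"
    by (simp add: tds_dsa_def)
  have letter: "w i = 0 \<or> w i = 1" for i
    using assms[of i] by arith
  show "r = stay_run 1 \<or> r = stay_run 2" if "is_run (tds_dsa lam t a b) w r"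
  proof -
    have r0: "r 0 = 0" and step: "\<And>i. (r i, w i, r (Suc i)) \<in> delta (tds_dsa lam t a b)"
      using that init by (auto simp: is_run_def)
    have r1: "r 1 = 1 \<or> r 1 = 2"
      using step[of 0] r0 unfolding delta by auto
    have rSuc: "r (Suc i) = r 1" for i
    proof (induction i)
      case (Suc i)
      then show ?case using step[of "Suc i"] r1 unfolding delta by auto
    qed simp
    have "r = stay_run (r 1)"
    proof
      show "r i = stay_run (r 1) i" for i
        using r0 rSuc by (cases i) (simp_all add: stay_run_def)
    qed
    with r1 show ?thesis by auto
  qed
  show "is_run (tds_dsa lam t a b) w r" if "r = stay_run 1 \<or> r = stay_run 2"
  proof -
    have "(stay_run q i, w i, stay_run q (Suc i)) \<in> delta (tds_dsa lam t a b)"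
      if "q = 1 \<or> q = 2" for q i
      using that letter[of i] unfolding delta stay_run_def by auto
    with \<open>r = stay_run 1 \<or> r = stay_run 2\<close> init show ?thesis
      by (auto simp: is_run_def stay_run_def)
  qed
qed

lemma run_value_tds_dsa:
  assumes "0 < lam" and "lam < 1" and "\<And>i. w i < 2"
  shows "run_value (tds_dsa lam t a b) w (stay_run 1) = disc_sum lam a b w - real_of_rat t"
    and "run_value (tds_dsa lam t a b) w (stay_run 2) = real_of_rat t - disc_sum lam a b w"
proof -
  let ?A = "tds_dsa lam t a b"
  let ?u = "\<lambda>i. real_of_rat lam ^ i * real_of_rat (if w i = 0 then a else b)"
  let ?head = "\<lambda>i. if i = 0 then real_of_rat t else 0"
  have letter: "w i = 0 \<or> w i = 1" for i
    using assms(3)[of i] by arith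
  have "real_of_rat (disc ?A) ^ i * real_of_rat (gamma ?A (stay_run 1 i, w i, stay_run 1 (Suc i)))
      = ?u i - ?head i"
    and "real_of_rat (disc ?A) ^ i * real_of_rat (gamma ?A (stay_run 2 i, w i, stay_run 2 (Suc i)))
      = ?head i - ?u i" for i
    using letter[of i]
    by (auto simp: gamma_def tds_dsa_def stay_run_def of_rat_diff of_rat_minus algebra_simps)
  then have "run_value ?A w (stay_run 1) = (\<Sum>i. ?u i - ?head i)"
    and "run_value ?A w (stay_run 2) = (\<Sum>i. ?head i - ?u i)"
    unfolding run_value_def by simp_all
  moreover have "summable ?u"
    using assms(1,2) by (rule summable_disc_sum)
  moreover have "?head sums real_of_rat t"
    using sums_single[of 0 "\<lambda>_. real_of_rat t"] by simp
  ultimately show "run_value ?A w (stay_run 1) = disc_sum lam a b w - real_of_rat t"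
    and "run_value ?A w (stay_run 2) = real_of_rat t - disc_sum lam a b w"
    unfolding disc_sum_def by (simp_all add: suminf_diff[symmetric] sums_summable sums_iff)
qed

lemma dsa_val_tds_dsa:
  assumes "0 < lam" and "lam < 1" and "\<And>i. w i < 2"
  shows "dsa_val (tds_dsa lam t a b) w = ereal (- \<bar>disc_sum lam a b w - real_of_rat t\<bar>)"
proof -
  have "{r. is_run (tds_dsa lam t a b) w r} = {stay_run 1, stay_run 2}"
    unfolding is_run_tds_dsa_iff[OF assms(3)] by auto
  then show ?thesis
    unfolding dsa_val_def using run_value_tds_dsa[OF assms] by (simp add: inf_min min_def)
qed

lemma dsa_val_zero_dsa:
  assumes "\<And>i. w i < 2"
  shows "dsa_val (zero_dsa lam) w = 0"
proof -
  have delta: "delta (zero_dsa lam) = {(0, 0, 0), (0, 1, 0)}"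
    by (simp add: delta_def zero_dsa_def)
  have init: "init (zero_dsa lam) = 0"
    by (simp add: zero_dsa_def)
  have letter: "w i = 0 \<or> w i = 1" for i
    using assms[of i] by arith
  have "is_run (zero_dsa lam) w r \<longleftrightarrow> r = (\<lambda>_. 0)" for r
  proof
    assume "is_run (zero_dsa lam) w r"
    then have "r 0 = 0" and "\<And>i. (r i, w i, r (Suc i)) \<in> delta (zero_dsa lam)"
      by (auto simp: is_run_def init)
    then have "r i = 0" for i
      unfolding delta by (cases i) auto
    then show "r = (\<lambda>_. 0)" by auto
  qed (use letter in \<open>auto simp: is_run_def delta init\<close>)
  moreover have "gamma (zero_dsa lam) (0, w i, 0) = 0" for i
    using letter[of i] by (auto simp: gamma_def zero_dsa_def)
  ultimately show ?thesis
    by (simp add: dsa_val_def run_value_def zero_ereal_def)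
qed

section \<open>The reduction\<close>

lemma enc_tds_eq_iff:
  "enc_tds lam t a b = enc_tds lam' t' a' b' \<longleftrightarrow> lam = lam' \<and> t = t' \<and> a = a' \<and> b = b'"
  by (simp add: enc_tds_def list_encode_eq)

lemma enc_dsa_eq_iff: "enc_dsa A = enc_dsa B \<longleftrightarrow> A = B"
proof
  assume "enc_dsa A = enc_dsa B"
  let ?enc_trans = "\<lambda>((p, s, q), c). list_encode [p, s, q, enc_rat c]"
  have "inj ?enc_trans"
    by (rule injI) (auto simp: list_encode_eq)
  moreover have "map ?enc_trans (trans A) = map ?enc_trans (trans B)"
    and "nstates A = nstates B" "nletters A = nletters B" "init A = init B" "disc A = disc B"
    using \<open>enc_dsa A = enc_dsa B\<close> by (simp_all add: enc_dsa_def list_encode_eq)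
  ultimately show "A = B"
    by (simp add: inj_map_eq_map)
qed simp

lemma LT_UNIV_prod_encode_iff:
  "LT_UNIV (prod_encode (enc_dsa A, enc_rat t))
    \<longleftrightarrow> wf_dsa A \<and> (\<forall>w. is_word A w \<longrightarrow> dsa_val A w < ereal (real_of_rat t))"
  by (auto simp: LT_UNIV_def enc_dsa_eq_iff)

lemma LT_INCL_prod_encode_iff:
  "LT_INCL (prod_encode (enc_dsa A, enc_dsa B))
    \<longleftrightarrow> wf_dsa A \<and> wf_dsa B \<and> nletters A = nletters B
        \<and> (\<forall>w. is_word A w \<longrightarrow> dsa_val A w < dsa_val B w)"
  by (auto simp: LT_INCL_def enc_dsa_eq_iff)

lemma TDS_enc_tds_iff:
  assumes "0 < lam" and "lam < 1"
  shows "TDS (enc_tds lam t a b) \<longleftrightarrow>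
    (\<exists>w. (\<forall>i. w i < 2) \<and> disc_sum lam a b w = real_of_rat t)"
proof
  assume "TDS (enc_tds lam t a b)"
  then obtain u :: "nat \<Rightarrow> rat" where u: "\<And>i. u i \<in> {a, b}"
    and sums: "(\<lambda>i. real_of_rat (u i) * real_of_rat lam ^ i) sums real_of_rat t"
    unfolding TDS_def enc_tds_eq_iff by blast
  define w where "w i = (if u i = a then 0 else 1 :: nat)" for i
  have "(\<lambda>i. real_of_rat lam ^ i * real_of_rat (if w i = 0 then a else b))
      = (\<lambda>i. real_of_rat (u i) * real_of_rat lam ^ i)"
    using u by (auto simp: w_def fun_eq_iff)
  then have "disc_sum lam a b w = real_of_rat t"
    unfolding disc_sum_def using sums by (simp add: sums_iff)
  moreover have "\<forall>i. w i < 2"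
    by (simp add: w_def)
  ultimately show "\<exists>w. (\<forall>i. w i < 2) \<and> disc_sum lam a b w = real_of_rat t"
    by blast
next
  assume "\<exists>w. (\<forall>i. w i < 2) \<and> disc_sum lam a b w = real_of_rat t"
  then obtain w where "disc_sum lam a b w = real_of_rat t" by blast
  then have "(\<lambda>i. real_of_rat lam ^ i * real_of_rat (if w i = 0 then a else b)) sums real_of_rat t"
    using summable_disc_sum[OF assms, of w a b] by (simp add: disc_sum_def sums_iff)
  then have "(\<lambda>i. real_of_rat (if w i = 0 then a else b) * real_of_rat lam ^ i) sums real_of_rat t"
    by (simp only: mult.commute)
  then have "\<exists>u :: nat \<Rightarrow> rat. (\<forall>i. u i \<in> {a, b}) \<and>
      (\<lambda>i. real_of_rat (u i) * real_of_rat lam ^ i) sums real_of_rat t"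
    by (intro exI[of _ "\<lambda>i. if w i = 0 then a else b"]) simp
  then show "TDS (enc_tds lam t a b)"
    unfolding TDS_def using assms by blast
qed

lemma tds_dsa_universal_iff:
  assumes "0 < lam" and "lam < 1"
  shows "(\<forall>w. is_word (tds_dsa lam t a b) w \<longrightarrow> dsa_val (tds_dsa lam t a b) w < 0)
    \<longleftrightarrow> \<not> (\<exists>w. (\<forall>i. w i < 2) \<and> disc_sum lam a b w = real_of_rat t)"
  using dsa_val_tds_dsa[OF assms] by (auto simp: is_word_tds_dsa zero_ereal_def)

lemma tds_dsa_included_iff:
  assumes "0 < lam" and "lam < 1"
  shows "(\<forall>w. is_word (tds_dsa lam t a b) w
      \<longrightarrow> dsa_val (tds_dsa lam t a b) w < dsa_val (zero_dsa lam) w)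
    \<longleftrightarrow> \<not> (\<exists>w. (\<forall>i. w i < 2) \<and> disc_sum lam a b w = real_of_rat t)"
  using tds_dsa_universal_iff[OF assms] dsa_val_zero_dsa by (auto simp: is_word_tds_dsa)

definition tds_code :: "nat \<Rightarrow> bool" where
  "tds_code n \<longleftrightarrow> (\<exists>lam t a b. n = enc_tds lam t a b \<and> 0 < lam \<and> lam < 1)"

definition tds_param :: "nat \<Rightarrow> nat \<Rightarrow> rat" where
  "tds_param i n = rat_of_code (list_code_nth i n)"

definition dsa_of_tds_code :: "nat \<Rightarrow> dsa" where
  "dsa_of_tds_code n = tds_dsa (tds_param 0 n) (tds_param 1 n) (tds_param 2 n) (tds_param 3 n)"

lemma tds_param_enc_tds:
  "tds_param 0 (enc_tds lam t a b) = lam" "tds_param 1 (enc_tds lam t a b) = t"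
  "tds_param 2 (enc_tds lam t a b) = a" "tds_param 3 (enc_tds lam t a b) = b"
  unfolding tds_param_def enc_tds_def by (subst list_code_nth_list_encode; simp)+

lemma tds_code_iff:
  "tds_code n \<longleftrightarrow> n = enc_tds (tds_param 0 n) (tds_param 1 n) (tds_param 2 n) (tds_param 3 n)
    \<and> 0 < tds_param 0 n \<and> tds_param 0 n < 1"
  unfolding tds_code_def by (metis tds_param_enc_tds)

lemma decidable_tds_code: "decidable tds_code"
proof -
  have "computable (\<lambda>n. of_bool (n = list_encode
      [enc_rat (rat_of_code (list_code_nth 0 n)), enc_rat (rat_of_code (list_code_nth 1 n)),
       enc_rat (rat_of_code (list_code_nth 2 n)), enc_rat (rat_of_code (list_code_nth 3 n))]
      \<and> rat_of_code (enc_rat 0) < rat_of_code (list_code_nth 0 n)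
      \<and> rat_of_code (list_code_nth 0 n) < rat_of_code (enc_rat 1)))"
    by (intro computable_of_bool_conj computable_of_bool_eq computable_rat_of_code_less
        computable_list_encode_Cons computable_enc_rat_of_code
        computable_list_code_nth computable_id computable_const)
  then show ?thesis
    unfolding decidable_iff_computable tds_code_iff by (simp add: enc_tds_def tds_param_def)
qed

lemma computable_enc_dsa_of_tds_code: "computable (\<lambda>n. enc_dsa (dsa_of_tds_code n))"
  unfolding dsa_of_tds_code_def tds_dsa_def enc_dsa_def tds_param_def
  by (simp del: list_encode.simps list_code_nth.simps,
      intro computable_list_encode_Cons computable_const
      computable_enc_rat_of_code computable_enc_rat_diff computable_enc_rat_uminus
      computable_list_code_nth)

lemma computable_enc_zero_dsa: "computable (\<lambda>n. enc_dsa (zero_dsa (tds_param 0 n)))"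
  unfolding zero_dsa_def enc_dsa_def tds_param_def
  by (simp del: list_encode.simps list_code_nth.simps,
      intro computable_list_encode_Cons computable_const
      computable_enc_rat_of_code computable_list_code_nth)

lemma TDS_imp_tds_code: "TDS n \<Longrightarrow> tds_code n"
  unfolding TDS_def tds_code_def by blast

lemma dsa_of_tds_code_enc_tds: "dsa_of_tds_code (enc_tds lam t a b) = tds_dsa lam t a b"
  unfolding dsa_of_tds_code_def tds_param_enc_tds ..

lemma TDS_iff_not_LT_UNIV:
  "TDS n \<longleftrightarrow> tds_code n \<and> \<not> LT_UNIV (prod_encode (enc_dsa (dsa_of_tds_code n), enc_rat 0))"
proof (cases "tds_code n")
  case True
  then obtain lam t a b where n: "n = enc_tds lam t a b" and lam: "0 < lam" "lam < 1"
    unfolding tds_code_def by blast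
  have "LT_UNIV (prod_encode (enc_dsa (tds_dsa lam t a b), enc_rat 0))
      \<longleftrightarrow> \<not> (\<exists>w. (\<forall>i. w i < 2) \<and> disc_sum lam a b w = real_of_rat t)"
    using tds_dsa_universal_iff[OF lam, of t a b]
    by (simp add: LT_UNIV_prod_encode_iff wf_dsa_tds_dsa[OF lam] zero_ereal_def)
  with True show ?thesis
    by (simp add: n dsa_of_tds_code_enc_tds TDS_enc_tds_iff[OF lam])
qed (use TDS_imp_tds_code in blast)

lemma TDS_iff_not_LT_INCL:
  "TDS n \<longleftrightarrow> tds_code n \<and>
    \<not> LT_INCL (prod_encode (enc_dsa (dsa_of_tds_code n), enc_dsa (zero_dsa (tds_param 0 n))))"
proof (cases "tds_code n")
  case True
  then obtain lam t a b where n: "n = enc_tds lam t a b" and lam: "0 < lam" "lam < 1"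
    unfolding tds_code_def by blast
  have "nletters (tds_dsa lam t a b) = nletters (zero_dsa lam)"
    by (simp add: tds_dsa_def zero_dsa_def)
  then have "LT_INCL (prod_encode (enc_dsa (tds_dsa lam t a b), enc_dsa (zero_dsa lam)))
      \<longleftrightarrow> \<not> (\<exists>w. (\<forall>i. w i < 2) \<and> disc_sum lam a b w = real_of_rat t)"
    using tds_dsa_included_iff[OF lam, of t a b]
    by (simp add: LT_INCL_prod_encode_iff wf_dsa_tds_dsa[OF lam] wf_dsa_zero_dsa[OF lam])
  with True show ?thesis
    by (simp add: n dsa_of_tds_code_enc_tds tds_param_enc_tds TDS_enc_tds_iff[OF lam])
qed (use TDS_imp_tds_code in blast)

theorem theorem29:
  assumes "\<not> decidable TDS"
  shows "\<not> decidable LT_UNIV \<and> \<not> decidable LT_INCL"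
proof (intro conjI notI)
  assume "decidable LT_UNIV"
  moreover have "computable (\<lambda>n. prod_encode (enc_dsa (dsa_of_tds_code n), enc_rat 0))"
    by (intro computable_prod_encode computable_enc_dsa_of_tds_code computable_const)
  ultimately have "decidable (\<lambda>n. LT_UNIV (prod_encode (enc_dsa (dsa_of_tds_code n), enc_rat 0)))"
    by (rule decidable_preimage)
  then have "decidable TDS"
    unfolding TDS_iff_not_LT_UNIV[abs_def] by (intro decidable_conj decidable_tds_code decidable_Not)
  with assms show False ..
next
  assume "decidable LT_INCL"
  moreover have "computable (\<lambda>n. prod_encode (enc_dsa (dsa_of_tds_code n),
      enc_dsa (zero_dsa (tds_param 0 n))))"
    by (intro computable_prod_encode computable_enc_dsa_of_tds_code computable_enc_zero_dsa)
  ultimately have "decidable (\<lambda>n. LT_INCL (prod_encode (enc_dsa (dsa_of_tds_code n),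
      enc_dsa (zero_dsa (tds_param 0 n)))))"
    by (rule decidable_preimage)
  then have "decidable TDS"
    unfolding TDS_iff_not_LT_INCL[abs_def] by (intro decidable_conj decidable_tds_code decidable_Not)
  with assms show False ..
qed

end
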